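(* Let $X$ be an infinite Hausdorff space. Then every finite rooted tree, equipped with the topology whose open sets are its upward closed subsets, is the image of a continuous surjection from $X$.
   Context: A finite rooted tree is a finite partially ordered set $(T,\le)$ with a least element (the root) such that for every $t\in T$ the set $\{s\in T\mid s\le t\}$ is linearly ordered. A subset $U\subseteq T$ is upward closed if $u\in U$ and $u\le v$ imply $v\in U$. *)

theory Defs
  imports "HOL-Analysis.Analysis"
begin

definition finite_rooted_tree :: "'b set \<Rightarrow> ('b \<Rightarrow> 'b \<Rightarrow> bool) \<Rightarrow> bool" where
  "finite_rooted_tree T le \<longleftrightarrow>
     finite T \<and>
     (\<forall>x\<in>T. le x x) \<and>
     (\<forall>x\<in>T. \<forall>y\<in>T. le x y \<and> le y x \<longrightarrow> x = y) \<and>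
     (\<forall>x\<in>T. \<forall>y\<in>T. \<forall>z\<in>T. le x y \<and> le y z \<longrightarrow> le x z) \<and>
     (\<exists>r\<in>T. \<forall>t\<in>T. le r t) \<and>
     (\<forall>t\<in>T. \<forall>s1\<in>T. \<forall>s2\<in>T. le s1 t \<and> le s2 t \<longrightarrow> le s1 s2 \<or> le s2 s1)"

definition upward_closed :: "'b set \<Rightarrow> ('b \<Rightarrow> 'b \<Rightarrow> bool) \<Rightarrow> 'b set \<Rightarrow> bool" where
  "upward_closed T le U \<longleftrightarrow> U \<subseteq> T \<and> (\<forall>u\<in>U. \<forall>v\<in>T. le u v \<longrightarrow> v \<in> U)"

definition upset_topology :: "'b set \<Rightarrow> ('b \<Rightarrow> 'b \<Rightarrow> bool) \<Rightarrow> 'b topology" where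
  "upset_topology T le = topology (upward_closed T le)"

end

theory Submission
  imports Defs
begin

text \<open>Only the root of the tree matters. Choose pairwise disjoint nonempty open sets
  \<open>U t\<close>, one for each vertex \<open>t\<close>; they exist because finitely many distinct points of a
  Hausdorff space have pairwise disjoint neighbourhoods, and an infinite space has as many
  points as needed. Send \<open>U t\<close> to \<open>t\<close> for \<open>t\<close> other than the root and everything else to
  the root. An upward closed set containing the root is the whole tree, and one that misses
  the root has preimage the union of the corresponding \<open>U t\<close>, so the map is continuous.\<close>

lemma openin_upset_topology: "openin (upset_topology T le) = upward_closed T le"
proof -
  have "istopology (upward_closed T le)"
    unfolding istopology_def upward_closed_def by blast
  then show ?thesis
    unfolding upset_topology_def by simp
qed

lemma topspace_upset_topology: "topspace (upset_topology T le) = T"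
  unfolding topspace_def openin_upset_topology upward_closed_def by auto

lemma continuous_map_upset_topology_root:
  assumes root: "r \<in> T" "\<And>t. t \<in> T \<Longrightarrow> le r t"
    and f: "f \<in> topspace X \<rightarrow> T"
    and fibres: "\<And>t. t \<in> T - {r} \<Longrightarrow> openin X {x \<in> topspace X. f x = t}"
  shows "continuous_map X (upset_topology T le) f"
  unfolding continuous_map_def topspace_upset_topology openin_upset_topology
proof (intro conjI allI impI f)
  fix S assume S: "upward_closed T le S"
  show "openin X {x \<in> topspace X. f x \<in> S}"
  proof (cases "r \<in> S")
    case True
    then have "S = T"
      using S root unfolding upward_closed_def by auto
    with f have "{x \<in> topspace X. f x \<in> S} = topspace X"
      by auto
    then show ?thesis
      by simp
  next
    case False
    then have "S \<subseteq> T - {r}"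
      using S unfolding upward_closed_def by auto
    then have "openin X (\<Union>t\<in>S. {x \<in> topspace X. f x = t})"
      using fibres by (intro openin_Union) auto
    moreover have "{x \<in> topspace X. f x \<in> S} = (\<Union>t\<in>S. {x \<in> topspace X. f x = t})"
      by auto
    ultimately show ?thesis
      by simp
  qed
qed

lemma Hausdorff_space_separate_finite:
  assumes X: "Hausdorff_space X" and S: "finite S" "S \<subseteq> topspace X"
  obtains U where "\<And>x. x \<in> S \<Longrightarrow> openin X (U x) \<and> x \<in> U x"
    and "pairwise (\<lambda>x y. disjnt (U x) (U y)) S"
proof -
  have "\<exists>A B. openin X A \<and> openin X B \<and> x \<in> A \<and> y \<in> B \<and> disjnt A B"
    if "x \<in> S" "y \<in> S" "x \<noteq> y" for x y
    using X S(2) that unfolding Hausdorff_space_def by (meson subsetD)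
  then obtain A B where AB: "\<And>x y. \<lbrakk>x \<in> S; y \<in> S; x \<noteq> y\<rbrakk> \<Longrightarrow>
      openin X (A x y) \<and> openin X (B x y) \<and> x \<in> A x y \<and> y \<in> B x y \<and> disjnt (A x y) (B x y)"
    by metis
  \<comment> \<open>Using \<open>B y x\<close> as well makes the choice symmetric: \<open>U x \<subseteq> A x y\<close> and \<open>U y \<subseteq> B x y\<close>.\<close>
  define U where "U x = (\<Inter>y \<in> S - {x}. A x y \<inter> B y x) \<inter> topspace X" for x
  show thesis
  proof
    fix x assume "x \<in> S"
    then show "openin X (U x) \<and> x \<in> U x"
      using AB S unfolding U_def by (auto intro!: openin_INT)
  next
    show "pairwise (\<lambda>x y. disjnt (U x) (U y)) S"
    proof (rule pairwiseI)
      fix x y assume "x \<in> S" "y \<in> S" "x \<noteq> y"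
      moreover have "U x \<subseteq> A x y" "U y \<subseteq> B x y"
        using calculation unfolding U_def by auto
      ultimately show "disjnt (U x) (U y)"
        using AB by (meson disjnt_subset1 disjnt_subset2)
    qed
  qed
qed

lemma finite_inj_into_infinite:
  assumes "finite A" "infinite B"
  obtains p where "inj_on p A" "p ` A \<subseteq> B"
proof -
  obtain C where "finite C" "card C = card A" "C \<subseteq> B"
    using infinite_arbitrarily_large[OF assms(2)] by blast
  then show thesis
    using card_le_inj[OF assms(1), of C] that by auto
qed

lemma Hausdorff_space_disjoint_open_family:
  assumes X: "Hausdorff_space X" "infinite (topspace X)" and I: "finite I"
  obtains U p where "\<And>i. i \<in> I \<Longrightarrow> openin X (U i) \<and> p i \<in> U i"
    and "pairwise (\<lambda>i j. disjnt (U i) (U j)) I"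
proof -
  obtain p where p: "inj_on p I" "p ` I \<subseteq> topspace X"
    using finite_inj_into_infinite[OF I X(2)] .
  obtain V where V: "\<And>x. x \<in> p ` I \<Longrightarrow> openin X (V x) \<and> x \<in> V x"
    and disj: "pairwise (\<lambda>x y. disjnt (V x) (V y)) (p ` I)"
    using Hausdorff_space_separate_finite[OF X(1) finite_imageI[OF I] p(2)] by blast
  have "pairwise (\<lambda>i j. disjnt (V (p i)) (V (p j))) I"
    using disj p(1) unfolding pairwise_def inj_on_def by blast
  then show thesis
    using that[of "V \<circ> p" p] V by auto
qed

lemma disjoint_family_classifier:
  assumes disj: "pairwise (\<lambda>i j. disjnt (U i) (U j)) I" and "d \<notin> I"
  obtains f where "\<And>i. i \<in> I \<Longrightarrow> f -` {i} = U i"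
    and "\<And>x. x \<notin> (\<Union>i\<in>I. U i) \<Longrightarrow> f x = d"
    and "range f \<subseteq> insert d I"
proof
  define f where "f x = (if x \<in> (\<Union>i\<in>I. U i) then THE i. i \<in> I \<and> x \<in> U i else d)" for x
  have f_U: "f x = i" if "i \<in> I" "x \<in> U i" for i x
    using disj that unfolding f_def pairwise_def disjnt_def by (auto intro!: the_equality)
  show f_out: "f x = d" if "x \<notin> (\<Union>i\<in>I. U i)" for x
    using that by (simp add: f_def)
  show "range f \<subseteq> insert d I"
    using f_U f_out by blast
  show "f -` {i} = U i" if "i \<in> I" for i
    using f_U f_out that \<open>d \<notin> I\<close> by blast
qed

lemma continuous_map_onto_upset_topology:
  assumes root: "r \<in> T" "\<And>t. t \<in> T \<Longrightarrow> le r t"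
    and U: "\<And>t. t \<in> T \<Longrightarrow> openin X (U t) \<and> p t \<in> U t"
    and disj: "pairwise (\<lambda>s t. disjnt (U s) (U t)) T"
  shows "\<exists>f. continuous_map X (upset_topology T le) f \<and> f ` topspace X = T"
proof -
  obtain f where fibre: "\<And>t. t \<in> T - {r} \<Longrightarrow> f -` {t} = U t"
    and f_r: "\<And>x. x \<notin> (\<Union>t\<in>T - {r}. U t) \<Longrightarrow> f x = r"
    and f_T: "range f \<subseteq> T"
    using disjoint_family_classifier[OF pairwise_subset[OF disj], of "T - {r}" r] root(1)
    by (metis Diff_iff Diff_subset insert_Diff singletonI)
  have "f (p t) = t" if "t \<in> T" for t
  proof (cases "t = r")
    case True
    then have "p t \<notin> (\<Union>s\<in>T - {r}. U s)"
      using disj U that unfolding pairwise_def disjnt_def by blast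
    then show ?thesis
      using True f_r by blast
  qed (use that fibre U in blast)
  moreover have "p ` T \<subseteq> topspace X"
    using U openin_subset by blast
  ultimately have "f ` topspace X = T"
    using f_T by (force simp: image_iff)
  moreover have "continuous_map X (upset_topology T le) f"
  proof (rule continuous_map_upset_topology_root[OF root(1)])
    show "f \<in> topspace X \<rightarrow> T"
      using f_T by auto
    fix t assume "t \<in> T - {r}"
    moreover have "{x \<in> topspace X. f x = t} = topspace X \<inter> f -` {t}"
      by auto
    ultimately show "openin X {x \<in> topspace X. f x = t}"
      using fibre U openin_subset by (metis Diff_iff inf.absorb2)
  qed (use root in auto)
  ultimately show ?thesis
    by blast
qed

theorem lemma9p5:
  fixes X :: "'a topology" and T :: "'b set" and le :: "'b \<Rightarrow> 'b \<Rightarrow> bool"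
  assumes "Hausdorff_space X" and "infinite (topspace X)"
    and "finite_rooted_tree T le"
  shows "\<exists>f. continuous_map X (upset_topology T le) f \<and> f ` topspace X = T"
proof -
  have "finite T"
    using assms(3) unfolding finite_rooted_tree_def by (elim conjE)
  obtain r where root: "r \<in> T" "\<And>t. t \<in> T \<Longrightarrow> le r t"
    using assms(3) unfolding finite_rooted_tree_def by (elim conjE bexE) blast
  obtain U p where "\<And>t. t \<in> T \<Longrightarrow> openin X (U t) \<and> p t \<in> U t"
    and "pairwise (\<lambda>s t. disjnt (U s) (U t)) T"
    using Hausdorff_space_disjoint_open_family[OF assms(1,2) \<open>finite T\<close>] by blast
  with root show ?thesis
    by (rule continuous_map_onto_upset_topology)
qed

end
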